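(* Every surjective $\boxplus$-morphism $\phi:[1]^m\to[1]^n$ has a section in $\boxplus$, i.e. there is a $\boxplus$-morphism $s:[1]^n\to[1]^m$ with $\phi\circ s$ the identity.
   Context: $[1]=\{0<1\}$, $[1]^n$ the product poset ($[1]^0=[0]$). An interval in a poset is a non-empty subset $[x,z]=\{y:x\leq y\leq z\}$. $\boxplus$ is the category whose objects are the $[1]^n$ ($n\geq0$) and whose morphisms are the monotone functions mapping every interval onto an interval. *)

theory Defs
  imports Main
begin

text \<open>The poset [1]^n: bool lists of length n (False < True), ordered componentwise.
  [1]^0 is the one-point poset (the empty list).\<close>

definition cube :: "nat \<Rightarrow> bool list set" where
  "cube n = {xs. length xs = n}"

definition cle :: "bool list \<Rightarrow> bool list \<Rightarrow> bool" where
  "cle xs ys \<longleftrightarrow> list_all2 (\<le>) xs ys"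

definition cinterval :: "nat \<Rightarrow> bool list \<Rightarrow> bool list \<Rightarrow> bool list set" where
  "cinterval n x z = {y \<in> cube n. cle x y \<and> cle y z}"

definition is_interval :: "nat \<Rightarrow> bool list set \<Rightarrow> bool" where
  "is_interval n S \<longleftrightarrow> (\<exists>x\<in>cube n. \<exists>z\<in>cube n. cle x z \<and> S = cinterval n x z)"

definition box_mor :: "nat \<Rightarrow> nat \<Rightarrow> (bool list \<Rightarrow> bool list) \<Rightarrow> bool" where
  "box_mor m n f \<longleftrightarrow>
     (\<forall>x\<in>cube m. f x \<in> cube n) \<and>
     (\<forall>x\<in>cube m. \<forall>y\<in>cube m. cle x y \<longrightarrow> cle (f x) (f y)) \<and>
     (\<forall>x\<in>cube m. \<forall>z\<in>cube m. cle x z \<longrightarrow> is_interval n (f ` cinterval m x z))"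

end

theory Submission
  imports Defs
begin

text \<open>Pick \<open>c\<close> maximal in the fibre of \<open>0\<close>. Above \<open>c\<close>, \<open>\<phi>\<close> is the join of the images of
  the atoms \<open>c + e\<^sub>i\<close>, and each atom is mapped onto a single unit vector \<open>e\<^sub>j\<close>: both facts
  come from lifting \<open>e\<^sub>j\<close> through the interval condition. By surjectivity every \<open>j\<close> is
  hit by some atom \<open>\<pi> j\<close>, and \<open>y \<mapsto> c \<union> \<pi>(y)\<close> is then a section; as a map that
  freezes some coordinates and injectively relabels the others, it is a box morphism.\<close>

definition ones :: "bool list \<Rightarrow> nat set" where
  "ones xs = {i. i < length xs \<and> xs ! i}"

definition of_ones :: "nat \<Rightarrow> nat set \<Rightarrow> bool list" where
  "of_ones m S = map (\<lambda>i. i \<in> S) [0..<m]"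

lemma ones_subset_length: "ones xs \<subseteq> {..<length xs}"
  by (auto simp: ones_def)

lemma finite_ones [simp]: "finite (ones xs)"
  using finite_subset[OF ones_subset_length] by blast

lemma ones_subset_cube: "x \<in> cube m \<Longrightarrow> ones x \<subseteq> {..<m}"
  using ones_subset_length[of x] by (simp add: cube_def)

lemma ones_inject: "length xs = length ys \<Longrightarrow> ones xs = ones ys \<Longrightarrow> xs = ys"
  by (rule nth_equalityI) (auto simp: ones_def set_eq_iff)

lemma cube_eq_iff_ones: "x \<in> cube m \<Longrightarrow> y \<in> cube m \<Longrightarrow> x = y \<longleftrightarrow> ones x = ones y"
  using ones_inject[of x y] by (auto simp: cube_def)

lemma cle_iff_ones: "x \<in> cube m \<Longrightarrow> y \<in> cube m \<Longrightarrow> cle x y \<longleftrightarrow> ones x \<subseteq> ones y"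
  unfolding cle_def list_all2_conv_all_nth ones_def le_bool_def cube_def by auto

lemma mem_cinterval_iff_ones:
  "x \<in> cube m \<Longrightarrow> z \<in> cube m \<Longrightarrow>
     y \<in> cinterval m x z \<longleftrightarrow> y \<in> cube m \<and> ones x \<subseteq> ones y \<and> ones y \<subseteq> ones z"
  by (auto simp: cinterval_def cle_iff_ones)

lemma ones_list_update_True: "i < length xs \<Longrightarrow> ones (xs[i := True]) = insert i (ones xs)"
  by (auto simp: ones_def nth_list_update)

lemma list_update_in_cube: "x \<in> cube m \<Longrightarrow> x[i := b] \<in> cube m"
  by (simp add: cube_def)

lemma ones_replicate: "ones (replicate n b) = (if b then {..<n} else {})"
  by (auto simp: ones_def)

lemma replicate_in_cube: "replicate n b \<in> cube n"
  by (simp add: cube_def)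

lemma of_ones_in_cube: "of_ones m S \<in> cube m"
  by (simp add: cube_def of_ones_def)

lemma ones_of_ones [simp]: "ones (of_ones m S) = S \<inter> {..<m}"
  by (auto simp: ones_def of_ones_def)

lemma box_mor_in_cube: "box_mor m n f \<Longrightarrow> x \<in> cube m \<Longrightarrow> f x \<in> cube n"
  unfolding box_mor_def by blast

lemma box_mor_mono:
  "box_mor m n f \<Longrightarrow> x \<in> cube m \<Longrightarrow> y \<in> cube m \<Longrightarrow> ones x \<subseteq> ones y \<Longrightarrow>
    ones (f x) \<subseteq> ones (f y)"
  using box_mor_in_cube[of m n f] unfolding box_mor_def by (metis cle_iff_ones)

lemma box_mor_lift:
  assumes f: "box_mor m n f" and xz: "x \<in> cube m" "z \<in> cube m" "ones x \<subseteq> ones z"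
    and y: "y \<in> cube n" "ones (f x) \<subseteq> ones y" "ones y \<subseteq> ones (f z)"
  shows "\<exists>w \<in> cube m. ones x \<subseteq> ones w \<and> ones w \<subseteq> ones z \<and> f w = y"
proof -
  have "cle x z"
    using xz by (simp add: cle_iff_ones)
  then obtain a b where ab: "a \<in> cube n" "b \<in> cube n" "f ` cinterval m x z = cinterval n a b"
    using f xz unfolding box_mor_def is_interval_def by blast
  have "x \<in> cinterval m x z" "z \<in> cinterval m x z"
    using xz by (simp_all add: mem_cinterval_iff_ones)
  then have "f x \<in> cinterval n a b" "f z \<in> cinterval n a b"
    using ab(3) by blast+
  with y have "y \<in> cinterval n a b"
    using ab(1,2) by (auto simp: mem_cinterval_iff_ones)
  then have "y \<in> f ` cinterval m x z"
    using ab(3) by simp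
  then obtain w where "w \<in> cinterval m x z" "f w = y"
    by blast
  then show ?thesis
    using mem_cinterval_iff_ones[OF xz(1,2)] by blast
qed

lemma ex_maximal_in_cube:
  assumes "x \<in> cube m" "P x"
  shows "\<exists>c \<in> cube m. P c \<and> (\<forall>i<m. i \<notin> ones c \<longrightarrow> \<not> P (c[i := True]))"
proof -
  have "\<exists>c. (c \<in> cube m \<and> P c) \<and> (\<forall>y. y \<in> cube m \<and> P y \<longrightarrow> card (ones y) \<le> card (ones c))"
  proof (rule ex_has_greatest_nat[where b = "Suc m"])
    have "card (ones y) \<le> m" if "y \<in> cube m" for y
      using card_mono[OF _ ones_subset_cube[OF that]] by simp
    then show "\<forall>y. y \<in> cube m \<and> P y \<longrightarrow> card (ones y) < Suc m"
      by (simp add: less_Suc_eq_le)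
  qed (use assms in blast)
  then obtain c where c: "c \<in> cube m" "P c"
    and greatest: "\<And>y. y \<in> cube m \<Longrightarrow> P y \<Longrightarrow> card (ones y) \<le> card (ones c)"
    by blast
  have "\<not> P (c[i := True])" if "i < m" "i \<notin> ones c" for i
  proof
    assume "P (c[i := True])"
    then have "card (ones (c[i := True])) \<le> card (ones c)"
      using c(1) by (intro greatest list_update_in_cube)
    moreover have "ones (c[i := True]) = insert i (ones c)"
      using that c(1) by (simp add: ones_list_update_True cube_def)
    ultimately show False
      using that(2) by simp
  qed
  with c show ?thesis by blast
qed

lemma box_mor_atom_image_singleton:
  assumes phi: "box_mor m n phi" and c: "c \<in> cube m" "ones (phi c) = {}"
    and i: "i < m" "i \<notin> ones c" and j: "j \<in> ones (phi (c[i := True]))"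
  shows "ones (phi (c[i := True])) = {j}"
proof -
  let ?e = "of_ones n {j}"
  have ci: "c[i := True] \<in> cube m" "ones (c[i := True]) = insert i (ones c)"
    using c(1) i(1) by (simp_all add: list_update_in_cube ones_list_update_True cube_def)
  have "j < n"
    using j ones_subset_cube[OF box_mor_in_cube[OF phi ci(1)]] by blast
  then have e: "ones ?e = {j}"
    by simp
  then have "ones (phi c) \<subseteq> ones ?e" "ones ?e \<subseteq> ones (phi (c[i := True]))"
    using c(2) j by simp_all
  moreover have "ones c \<subseteq> ones (c[i := True])"
    using ci(2) by blast
  ultimately obtain w where w: "w \<in> cube m" "ones c \<subseteq> ones w" "ones w \<subseteq> ones (c[i := True])"
    and phi_w: "phi w = ?e"
    using box_mor_lift[OF phi c(1) ci(1)] of_ones_in_cube by metis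
  have "ones w = ones c \<or> ones w = ones (c[i := True])"
    using w(2,3) unfolding ci(2) by blast
  then have "w = c \<or> w = c[i := True]"
    using w(1) c(1) ci(1) by (metis cube_eq_iff_ones)
  moreover have "phi c \<noteq> ?e"
    using c(2) e by (metis insert_not_empty)
  ultimately have "phi (c[i := True]) = ?e"
    using phi_w by metis
  then show ?thesis
    using e by simp
qed

lemma box_mor_atom_below:
  assumes phi: "box_mor m n phi" and c: "c \<in> cube m"
    and x: "x \<in> cube m" "ones c \<subseteq> ones x" and i: "i \<in> ones x - ones c"
  shows "ones (phi (c[i := True])) \<subseteq> ones (phi x)"
proof -
  have "i < m"
    using x(1) i ones_subset_cube by blast
  then have "ones (c[i := True]) = insert i (ones c)"
    using c by (simp add: ones_list_update_True cube_def)
  then show ?thesis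
    using x i by (intro box_mor_mono[OF phi] list_update_in_cube c) auto
qed

text \<open>Lift the unit vector \<open>e\<^sub>j\<close> into \<open>[c, x]\<close>: either the lift is \<open>x\<close> itself, and then
  every atom below \<open>x\<close> maps onto \<open>e\<^sub>j\<close>, or it is strictly smaller and induction applies.\<close>

lemma box_mor_ones_subset_atoms:
  assumes phi: "box_mor m n phi" and c: "c \<in> cube m" "ones (phi c) = {}"
    and c_maximal: "\<And>i. i < m \<Longrightarrow> i \<notin> ones c \<Longrightarrow> ones (phi (c[i := True])) \<noteq> {}"
    and x: "x \<in> cube m" "ones c \<subseteq> ones x"
  shows "ones (phi x) \<subseteq> (\<Union>i \<in> ones x - ones c. ones (phi (c[i := True])))"
  using x
proof (induction "card (ones x - ones c)" arbitrary: x rule: less_induct)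
  case less
  show ?case
  proof
    fix j assume j: "j \<in> ones (phi x)"
    let ?e = "of_ones n {j}"
    have "j < n"
      using j ones_subset_cube[OF box_mor_in_cube[OF phi less.prems(1)]] by blast
    then have e: "ones ?e = {j}"
      by simp
    then have "ones (phi c) \<subseteq> ones ?e" "ones ?e \<subseteq> ones (phi x)"
      using c(2) j by simp_all
    then obtain w where w: "w \<in> cube m" "ones c \<subseteq> ones w" "ones w \<subseteq> ones x"
      and phi_w: "phi w = ?e"
      using box_mor_lift[OF phi c(1) less.prems(1,2)] of_ones_in_cube by metis
    show "j \<in> (\<Union>i \<in> ones x - ones c. ones (phi (c[i := True])))"
    proof (cases "ones w = ones x")
      case True
      then have phi_x: "phi x = ?e"
        using phi_w w(1) less.prems(1) by (metis cube_eq_iff_ones)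
      then have "ones x \<noteq> ones c"
        using c e by (metis cube_eq_iff_ones insert_not_empty less.prems(1))
      then obtain i where i: "i \<in> ones x - ones c"
        using less.prems(2) by blast
      then have "ones (phi (c[i := True])) \<subseteq> {j}"
        using box_mor_atom_below[OF phi c(1) less.prems] e phi_x by simp
      moreover have "ones (phi (c[i := True])) \<noteq> {}"
        using i less.prems(1) ones_subset_cube by (intro c_maximal) auto
      ultimately show ?thesis
        using i by blast
    next
      case False
      then have "ones w - ones c \<subset> ones x - ones c"
        using w(2,3) by blast
      then have "card (ones w - ones c) < card (ones x - ones c)"
        by (simp add: psubset_card_mono)
      moreover have "j \<in> ones (phi w)"
        using phi_w e by simp
      ultimately have "j \<in> (\<Union>i \<in> ones w - ones c. ones (phi (c[i := True])))"
        using less.hyps w(1,2) by blast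
      then show ?thesis
        using w(3) by blast
    qed
  qed
qed

lemma box_mor_ones_above_base:
  assumes phi: "box_mor m n phi" and c: "c \<in> cube m" "ones (phi c) = {}"
    and c_maximal: "\<And>i. i < m \<Longrightarrow> i \<notin> ones c \<Longrightarrow> ones (phi (c[i := True])) \<noteq> {}"
    and x: "x \<in> cube m" "ones c \<subseteq> ones x"
  shows "ones (phi x) = (\<Union>i \<in> ones x - ones c. ones (phi (c[i := True])))"
  using box_mor_ones_subset_atoms[OF assms] box_mor_atom_below[OF phi c(1) x] by blast

lemma box_mor_embedding:
  assumes pi: "inj_on pi {..<n}" "pi ` {..<n} \<subseteq> {..<m} - C"
  shows "box_mor n m (\<lambda>y. of_ones m (C \<union> pi ` ones y))"
proof -
  define s where "s y = of_ones m (C \<union> pi ` ones y)" for y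
  have ones_s: "ones (s y) = (C \<inter> {..<m}) \<union> pi ` ones y" if "y \<in> cube n" for y
    using ones_subset_cube[OF that] pi(2) by (auto simp: s_def)
  have s_mono: "ones (s y) \<subseteq> ones (s z)" if "y \<in> cube n" "z \<in> cube n" "ones y \<subseteq> ones z" for y z
    using that by (auto simp: ones_s)
  have s_onto: "w \<in> s ` cinterval n y z"
    if yz: "y \<in> cube n" "z \<in> cube n" and w: "w \<in> cinterval m (s y) (s z)" for y z w
  proof -
    define v where "v = of_ones n {j. pi j \<in> ones w}"
    have w': "w \<in> cube m" "ones (s y) \<subseteq> ones w" "ones w \<subseteq> ones (s z)"
      using w by (simp_all add: mem_cinterval_iff_ones s_def of_ones_in_cube)
    have "ones y \<subseteq> ones v"
      using w'(2) ones_subset_cube[OF yz(1)] by (auto simp: ones_s[OF yz(1)] v_def)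
    moreover have "ones v \<subseteq> ones z"
    proof
      fix j assume "j \<in> ones v"
      then have j: "j < n" "pi j \<in> ones w"
        by (simp_all add: v_def)
      then obtain j' where "j' \<in> ones z" "pi j = pi j'"
        using w'(3) pi(2) by (auto simp: ones_s[OF yz(2)])
      then show "j \<in> ones z"
        using pi(1) j(1) ones_subset_cube[OF yz(2)] by (metis inj_on_def lessThan_iff subsetD)
    qed
    moreover have "ones (s v) = ones w"
      using w'(2,3) ones_subset_cube[OF yz(2)] ones_subset_cube[OF w'(1)]
      by (auto simp: ones_s yz of_ones_in_cube v_def)
    then have "s v = w"
      using w'(1) by (metis cube_eq_iff_ones of_ones_in_cube s_def)
    moreover have "v \<in> cube n"
      by (simp add: v_def of_ones_in_cube)
    ultimately have "v \<in> cinterval n y z"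
      by (simp add: mem_cinterval_iff_ones[OF yz])
    then show ?thesis
      using \<open>s v = w\<close> by blast
  qed
  have s_cube: "s y \<in> cube m" for y
    by (simp add: s_def of_ones_in_cube)
  have s_cle: "cle (s y) (s z)" if "y \<in> cube n" "z \<in> cube n" "cle y z" for y z
    using that s_mono by (simp add: cle_iff_ones[OF s_cube s_cube] cle_iff_ones[of y n z])
  have "box_mor n m s"
    unfolding box_mor_def
  proof (intro conjI ballI impI)
    fix y z assume yz: "y \<in> cube n" "z \<in> cube n" "cle y z"
    have "s ` cinterval n y z \<subseteq> cinterval m (s y) (s z)"
      using s_mono yz
      by (auto simp: mem_cinterval_iff_ones[OF s_cube s_cube] mem_cinterval_iff_ones[OF yz(1,2)] s_cube)
    with s_onto[OF yz(1,2)] have "s ` cinterval n y z = cinterval m (s y) (s z)"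
      by blast
    then show "is_interval m (s ` cinterval n y z)"
      using s_cle[OF yz] s_cube unfolding is_interval_def by blast
  qed (use s_cube s_cle in auto)
  then show ?thesis
    unfolding s_def[abs_def] .
qed

lemma box_mor_surj_top:
  assumes phi: "box_mor m n phi" and surj: "phi ` cube m = cube n"
  shows "ones (phi (replicate m True)) = {..<n}"
proof -
  obtain x where x: "x \<in> cube m" "phi x = replicate n True"
    using surj replicate_in_cube by (metis imageE)
  have "ones x \<subseteq> ones (replicate m True)"
    using ones_subset_cube[OF x(1)] by (simp add: ones_replicate)
  then have "{..<n} \<subseteq> ones (phi (replicate m True))"
    using box_mor_mono[OF phi x(1) replicate_in_cube] x(2) by (simp add: ones_replicate)
  then show ?thesis
    using ones_subset_cube[OF box_mor_in_cube[OF phi replicate_in_cube]] by blast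
qed

lemma box_mor_surj_unit_atoms:
  assumes phi: "box_mor m n phi" and surj: "phi ` cube m = cube n"
    and c: "c \<in> cube m" "ones (phi c) = {}"
    and c_maximal: "\<And>i. i < m \<Longrightarrow> i \<notin> ones c \<Longrightarrow> ones (phi (c[i := True])) \<noteq> {}"
    and j: "j < n"
  shows "\<exists>i \<in> {..<m} - ones c. ones (phi (c[i := True])) = {j}"
proof -
  have "ones c \<subseteq> ones (replicate m True)"
    using ones_subset_cube[OF c(1)] by (simp add: ones_replicate)
  moreover have "j \<in> ones (phi (replicate m True))"
    using box_mor_surj_top[OF phi surj] j by simp
  ultimately obtain i where "i \<in> ones (replicate m True) - ones c" "j \<in> ones (phi (c[i := True]))"
    using box_mor_ones_above_base[OF phi c c_maximal replicate_in_cube] by blast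
  then show ?thesis
    using box_mor_atom_image_singleton[OF phi c] by (auto simp: ones_replicate)
qed

lemma box_mor_section_above_base:
  assumes phi: "box_mor m n phi" and c: "c \<in> cube m" "ones (phi c) = {}"
    and c_maximal: "\<And>i. i < m \<Longrightarrow> i \<notin> ones c \<Longrightarrow> ones (phi (c[i := True])) \<noteq> {}"
    and pi: "\<And>j. j < n \<Longrightarrow> pi j \<in> {..<m} - ones c"
      "\<And>j. j < n \<Longrightarrow> ones (phi (c[pi j := True])) = {j}"
    and y: "y \<in> cube n"
  shows "phi (of_ones m (ones c \<union> pi ` ones y)) = y"
proof -
  let ?x = "of_ones m (ones c \<union> pi ` ones y)"
  have "ones ?x = ones c \<union> pi ` ones y"
    using ones_subset_cube[OF c(1)] ones_subset_cube[OF y] pi(1) by auto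
  moreover have "ones c \<inter> pi ` ones y = {}"
    using ones_subset_cube[OF y] pi(1) by fastforce
  ultimately have "ones ?x - ones c = pi ` ones y" "ones c \<subseteq> ones ?x"
    by blast+
  then have "ones (phi ?x) = (\<Union>j \<in> ones y. ones (phi (c[pi j := True])))"
    using box_mor_ones_above_base[OF phi c c_maximal of_ones_in_cube] by simp
  also have "\<dots> = ones y"
    using ones_subset_cube[OF y] pi(2) by auto
  finally show ?thesis
    using box_mor_in_cube[OF phi of_ones_in_cube] y by (metis cube_eq_iff_ones)
qed

theorem mainTheorem10:
  fixes m n :: nat and phi :: "bool list \<Rightarrow> bool list"
  assumes "box_mor m n phi"
    and "phi ` cube m = cube n"
  shows "\<exists>s. box_mor n m s \<and> (\<forall>y\<in>cube n. phi (s y) = y)"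
proof -
  obtain x0 where "x0 \<in> cube m" "ones (phi x0) = {}"
    using assms(2) replicate_in_cube[of n False] by (metis imageE ones_replicate)
  then obtain c where c: "c \<in> cube m" "ones (phi c) = {}"
    and c_maximal: "\<And>i. i < m \<Longrightarrow> i \<notin> ones c \<Longrightarrow> ones (phi (c[i := True])) \<noteq> {}"
    using ex_maximal_in_cube[of x0 m "\<lambda>x. ones (phi x) = {}"] by blast
  have "\<exists>i. i \<in> {..<m} - ones c \<and> ones (phi (c[i := True])) = {j}" if "j < n" for j
    using box_mor_surj_unit_atoms[OF assms c c_maximal that] by blast
  then obtain pi where pi: "\<And>j. j < n \<Longrightarrow> pi j \<in> {..<m} - ones c"
    "\<And>j. j < n \<Longrightarrow> ones (phi (c[pi j := True])) = {j}"
    by metis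
  then have "inj_on pi {..<n}"
    by (metis inj_onI lessThan_iff singleton_inject)
  with pi have "box_mor n m (\<lambda>y. of_ones m (ones c \<union> pi ` ones y))"
    by (intro box_mor_embedding) auto
  moreover have "\<forall>y \<in> cube n. phi (of_ones m (ones c \<union> pi ` ones y)) = y"
    using box_mor_section_above_base[OF assms(1) c c_maximal pi] by blast
  ultimately show ?thesis
    by blast
qed

end
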